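(* Let $R$ be a commutative ring and $Q$ an ordered quiver with vertex set $Q_0=\{1,\dots,n\}$. Let $\Lambda$ be the incidence $R$-algebra of $Q$, regarded as the $R$-subalgebra $\Lambda=\bigoplus_{a\ge b}R\,E_{ba}\subseteq\mathrm{M}_n(R)$. Then $H^i(\Lambda,\mathrm{M}_n(R)/\Lambda)=0$ for all $i\ge 0$.
   Context: A finite quiver $Q$ without oriented cycles is ordered if for each arrow $\alpha$ there is no oriented path other than $\alpha$ from the tail $t(\alpha)$ to the head $h(\alpha)$. On $Q_0$ set $a\ge b$ if $a=b$ or there is an oriented path from $a$ to $b$; this is a partial order. The incidence algebra is $RQ/I$ where $I$ is generated by differences of oriented paths with the same head and tail; it is $R$-free with basis the classes $e_{ba}$ ($a\ge b$) of paths from $a$ to $b$, and $e_{ba}\mapsto E_{ba}$ (matrix unit) identifies it with $\bigoplus_{a\ge b}RE_{ba}\subseteq\mathrm{M}_n(R)$. $H^i$ is Hochschild cohomology ($\mathrm{Ext}$ over $\Lambda\otimes_R\Lambda^{op}$), with $\mathrm{M}_n(R)/\Lambda$ a $\Lambda$-bimodule via matrix multiplication. *)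

theory Defs
  imports Main
begin

(* n x n matrices over R with rows/columns indexed by the vertices 1..n,
   represented as functions vanishing outside {1..n} x {1..n}. *)
type_synonym 'a mat = "nat \<Rightarrow> nat \<Rightarrow> 'a"

definition mats :: "nat \<Rightarrow> 'a::zero mat set" where
  "mats n = {X. \<forall>i j. (i \<notin> {1..n} \<or> j \<notin> {1..n}) \<longrightarrow> X i j = 0}"

definition mmul :: "nat \<Rightarrow> 'a::comm_ring_1 mat \<Rightarrow> 'a mat \<Rightarrow> 'a mat" where
  "mmul n X Y = (\<lambda>i j. \<Sum>k\<in>{1..n}. X i k * Y k j)"

definition madd :: "'a::comm_ring_1 mat \<Rightarrow> 'a mat \<Rightarrow> 'a mat" where
  "madd X Y = (\<lambda>i j. X i j + Y i j)"

definition msmult :: "'a::comm_ring_1 \<Rightarrow> 'a mat \<Rightarrow> 'a mat" where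
  "msmult c X = (\<lambda>i j. c * X i j)"

(* Quivers: arrows Arr, tail t, head h. qpath a ps b: ps is an oriented path from a to b. *)
fun qpath :: "'q set \<Rightarrow> ('q \<Rightarrow> nat) \<Rightarrow> ('q \<Rightarrow> nat) \<Rightarrow> nat \<Rightarrow> 'q list \<Rightarrow> nat \<Rightarrow> bool" where
  "qpath Arr t h a [] b = (a = b)"
| "qpath Arr t h a (x # xs) b = (x \<in> Arr \<and> t x = a \<and> qpath Arr t h (h x) xs b)"

definition ordered_quiver :: "nat \<Rightarrow> 'q set \<Rightarrow> ('q \<Rightarrow> nat) \<Rightarrow> ('q \<Rightarrow> nat) \<Rightarrow> bool" where
  "ordered_quiver n Arr t h \<longleftrightarrow>
     finite Arr
   \<and> (\<forall>x\<in>Arr. t x \<in> {1..n} \<and> h x \<in> {1..n})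
   \<and> (\<forall>a ps. qpath Arr t h a ps a \<longrightarrow> ps = [])
   \<and> (\<forall>x\<in>Arr. \<forall>ps. qpath Arr t h (t x) ps (h x) \<longrightarrow> ps = [x])"

definition qgeq :: "'q set \<Rightarrow> ('q \<Rightarrow> nat) \<Rightarrow> ('q \<Rightarrow> nat) \<Rightarrow> nat \<Rightarrow> nat \<Rightarrow> bool" where
  "qgeq Arr t h a b \<longleftrightarrow> (\<exists>ps. qpath Arr t h a ps b)"

(* incidence algebra: span of E_ba (row b, column a) with a \<ge> b *)
definition incidence_alg :: "nat \<Rightarrow> 'q set \<Rightarrow> ('q \<Rightarrow> nat) \<Rightarrow> ('q \<Rightarrow> nat) \<Rightarrow> 'a::comm_ring_1 mat set" where
  "incidence_alg n Arr t h = {X \<in> mats n. \<forall>b a. X b a \<noteq> 0 \<longrightarrow> qgeq Arr t h a b}"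

(* Concrete model of the quotient bimodule M_n(R)/Lambda: matrices supported on the
   positions (b,a) with not (a \<ge> b); the class of X corresponds to qproj X. *)
definition qproj :: "nat \<Rightarrow> 'q set \<Rightarrow> ('q \<Rightarrow> nat) \<Rightarrow> ('q \<Rightarrow> nat) \<Rightarrow> 'a::comm_ring_1 mat \<Rightarrow> 'a mat" where
  "qproj n Arr t h X = (\<lambda>b a. if b \<in> {1..n} \<and> a \<in> {1..n} \<and> \<not> qgeq Arr t h a b then X b a else 0)"

definition quot_mod :: "nat \<Rightarrow> 'q set \<Rightarrow> ('q \<Rightarrow> nat) \<Rightarrow> ('q \<Rightarrow> nat) \<Rightarrow> 'a::comm_ring_1 mat set" where
  "quot_mod n Arr t h = {X. qproj n Arr t h X = X}"

definition lact where "lact n Arr t h L M = qproj n Arr t h (mmul n L M)"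
definition ract where "ract n Arr t h M L = qproj n Arr t h (mmul n M L)"

(* Hochschild i-cochains: R-multilinear maps Lambda^i \<rightarrow> M_n(R)/Lambda (arguments as lists) *)
definition hcochain :: "nat \<Rightarrow> 'q set \<Rightarrow> ('q \<Rightarrow> nat) \<Rightarrow> ('q \<Rightarrow> nat) \<Rightarrow> nat
     \<Rightarrow> ('a::comm_ring_1 mat list \<Rightarrow> 'a mat) \<Rightarrow> bool" where
  "hcochain n Arr t h i f \<longleftrightarrow>
     (\<forall>xs\<in>lists (incidence_alg n Arr t h). length xs = i \<longrightarrow> f xs \<in> quot_mod n Arr t h)
   \<and> (\<forall>xs\<in>lists (incidence_alg n Arr t h). length xs = i \<longrightarrow>
        (\<forall>k<i. \<forall>x\<in>incidence_alg n Arr t h. \<forall>y\<in>incidence_alg n Arr t h. \<forall>c.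
           f (xs[k := madd (msmult c x) y]) = madd (msmult c (f (xs[k := x]))) (f (xs[k := y]))))"

(* Hochschild differential C^i \<rightarrow> C^(i+1), applied to a list xs of length i+1 *)
definition hdiff :: "nat \<Rightarrow> 'q set \<Rightarrow> ('q \<Rightarrow> nat) \<Rightarrow> ('q \<Rightarrow> nat) \<Rightarrow> nat
     \<Rightarrow> ('a::comm_ring_1 mat list \<Rightarrow> 'a mat) \<Rightarrow> 'a mat list \<Rightarrow> 'a mat" where
  "hdiff n Arr t h i f xs = (\<lambda>r s.
       lact n Arr t h (xs ! 0) (f (drop 1 xs)) r s
     + (\<Sum>k\<in>{1..i}. (-1) ^ k * f (take (k - 1) xs @ [mmul n (xs ! (k - 1)) (xs ! k)] @ drop (k + 1) xs) r s)
     + (-1) ^ (i + 1) * ract n Arr t h (f (take i xs)) (xs ! i) r s)"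

definition hochschild_vanishes :: "nat \<Rightarrow> 'q set \<Rightarrow> ('q \<Rightarrow> nat) \<Rightarrow> ('q \<Rightarrow> nat) \<Rightarrow> nat
     \<Rightarrow> 'a::comm_ring_1 itself \<Rightarrow> bool" where
  "hochschild_vanishes n Arr t h i _ \<longleftrightarrow>
     (\<forall>f :: 'a mat list \<Rightarrow> 'a mat.
        hcochain n Arr t h i f
      \<and> (\<forall>xs\<in>lists (incidence_alg n Arr t h). length xs = Suc i \<longrightarrow> hdiff n Arr t h i f xs = (\<lambda>_ _. 0))
      \<longrightarrow> (if i = 0 then f [] = (\<lambda>_ _. 0)
           else (\<exists>g. hcochain n Arr t h (i - 1) g
                   \<and> (\<forall>xs\<in>lists (incidence_alg n Arr t h). length xs = i \<longrightarrow> hdiff n Arr t h (i - 1) g xs = f xs))))"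

end

theory Submission
  imports Defs "HOL-Library.Function_Algebras" HOL.Modules
begin

text \<open>The diagonal matrix units \<open>E c = diag_unit c\<close> form a complete set of orthogonal idempotents in \<open>\<Lambda>\<close>.
  A matrix \<open>E c * x * E d\<close> with \<open>x \<in> \<Lambda>\<close> can only be nonzero if \<open>d \<ge> c\<close>, whereas in the quotient
  \<open>M = M\<^sub>n(R)/\<Lambda>\<close> we have \<open>E b * m * E c = 0\<close> whenever \<open>c \<ge> b\<close>. Consequently every cochain that is
  normalised over the diagonal subalgebra, i.e. evaluated on arguments \<open>E c\<^sub>0 * x\<^sub>1 * E c\<^sub>1, \<dots>,
  E c\<^sub>k\<^sub>-\<^sub>1 * x\<^sub>k * E c\<^sub>k\<close> and multiplied by \<open>E c\<^sub>0\<close> on the left and \<open>E c\<^sub>k\<close> on the right, is zero: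
  the chain forces \<open>c\<^sub>k \<ge> c\<^sub>0\<close>. The classical homotopy comparing the Hochschild complex with the
  normalised one is therefore a contracting homotopy \<open>h\<close> of \<open>C\<^sup>*(\<Lambda>, M)\<close>: \<open>d h + h d = id\<close>, so every
  cocycle \<open>f\<close> is the coboundary of \<open>h f\<close> (and is zero in degree 0).\<close>

section \<open>Matrices\<close>

lemma sum_fun_apply: "(sum F A) x = (\<Sum>a\<in>A. F a x)" for F :: "'b \<Rightarrow> 'c \<Rightarrow> 'a::comm_monoid_add"
  by (induction A rule: infinite_finite_induct) auto

lemma madd_eq_plus: "madd X Y = X + Y"
  by (simp add: fun_eq_iff madd_def)

interpretation msmult: additive "msmult c"
  by unfold_locales (simp add: fun_eq_iff msmult_def distrib_left)

lemma msmult_one [simp]: "msmult 1 X = X"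
  by (simp add: fun_eq_iff msmult_def)

definition diag_unit :: "nat \<Rightarrow> 'a::comm_ring_1 mat" where
  "diag_unit c = (\<lambda>i j. if i = c \<and> j = c then 1 else 0)"

lemma mmul_assoc: "mmul n (mmul n X Y) Z = mmul n X (mmul n Y Z)"
  unfolding mmul_def
  by (auto simp: fun_eq_iff sum_distrib_left sum_distrib_right mult.assoc intro: sum.swap)

interpretation mmul_left: additive "\<lambda>X. mmul n X Y" for n Y
  by unfold_locales (simp add: fun_eq_iff mmul_def distrib_right sum.distrib)

interpretation mmul_right: additive "mmul n X" for n X
  by unfold_locales (simp add: fun_eq_iff mmul_def distrib_left sum.distrib)

lemma mmul_msmult_left: "mmul n (msmult c X) Y = msmult c (mmul n X Y)"
  by (simp add: fun_eq_iff mmul_def msmult_def sum_distrib_left mult.assoc)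

lemma mmul_msmult_right: "mmul n X (msmult c Y) = msmult c (mmul n X Y)"
  by (simp add: fun_eq_iff mmul_def msmult_def sum_distrib_left mult.left_commute)

lemma mmul_diag_unit_left:
  "c \<in> {1..n} \<Longrightarrow> mmul n (diag_unit c) X = (\<lambda>i j. if i = c then X c j else 0)"
  by (simp add: fun_eq_iff mmul_def diag_unit_def if_distrib[of "\<lambda>u. u * _"] sum.delta cong: if_cong)

lemma mmul_diag_unit_right:
  "c \<in> {1..n} \<Longrightarrow> mmul n X (diag_unit c) = (\<lambda>i j. if j = c then X i c else 0)"
  by (simp add: fun_eq_iff mmul_def diag_unit_def if_distrib[of "\<lambda>u. _ * u"] sum.delta' cong: if_cong)

lemma diag_unit_idem: "c \<in> {1..n} \<Longrightarrow> mmul n (diag_unit c) (diag_unit c) = diag_unit c"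
  by (subst mmul_diag_unit_left) (auto simp: fun_eq_iff diag_unit_def)

lemma sum_mmul_diag_unit_left:
  assumes "X \<in> mats n" shows "(\<Sum>c\<in>{1..n}. mmul n (diag_unit c) X) = X"
proof -
  have "(\<Sum>c\<in>{1..n}. mmul n (diag_unit c) X i j) = (\<Sum>c\<in>{1..n}. if i = c then X c j else 0)" for i j
    by (rule sum.cong) (simp_all add: mmul_diag_unit_left)
  then show ?thesis using assms by (auto simp: fun_eq_iff sum_fun_apply mats_def)
qed

lemma sum_mmul_diag_unit_right:
  assumes "X \<in> mats n" shows "(\<Sum>c\<in>{1..n}. mmul n X (diag_unit c)) = X"
proof -
  have "(\<Sum>c\<in>{1..n}. mmul n X (diag_unit c) i j) = (\<Sum>c\<in>{1..n}. if j = c then X i c else 0)" for i j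
    by (rule sum.cong) (simp_all add: mmul_diag_unit_right)
  then show ?thesis using assms by (auto simp: fun_eq_iff sum_fun_apply mats_def)
qed

section \<open>The incidence algebra and the quotient bimodule\<close>

lemma qpath_append: "qpath Arr t h a ps b \<Longrightarrow> qpath Arr t h b qs c \<Longrightarrow> qpath Arr t h a (ps @ qs) c"
  by (induction ps arbitrary: a) auto

lemma qgeq_refl: "qgeq Arr t h a a"
  unfolding qgeq_def by (metis qpath.simps(1))

lemma qgeq_trans: "qgeq Arr t h a b \<Longrightarrow> qgeq Arr t h b c \<Longrightarrow> qgeq Arr t h a c"
  unfolding qgeq_def using qpath_append by blast

locale incidence =
  fixes n :: nat and Arr :: "'q set" and t h :: "'q \<Rightarrow> nat"
begin

abbreviation "alg \<equiv> incidence_alg n Arr t h"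
abbreviation "ge \<equiv> qgeq Arr t h"
abbreviation "proj \<equiv> qproj n Arr t h"
abbreviation "lmul \<equiv> lact n Arr t h"
abbreviation "rmul \<equiv> ract n Arr t h"
abbreviation "mm \<equiv> mmul n"
abbreviation "corner c x d \<equiv> mm (mm (diag_unit c) x) (diag_unit d)"

lemma alg_mats: "X \<in> alg \<Longrightarrow> X \<in> mats n"
  unfolding incidence_alg_def by simp

lemma alg_ge: "X \<in> alg \<Longrightarrow> X b a \<noteq> 0 \<Longrightarrow> ge a b"
  unfolding incidence_alg_def by auto

lemma algI: "X \<in> mats n \<Longrightarrow> (\<And>b a. X b a \<noteq> 0 \<Longrightarrow> ge a b) \<Longrightarrow> X \<in> alg"
  unfolding incidence_alg_def by auto

lemma diag_unit_mem: "c \<in> {1..n} \<Longrightarrow> diag_unit c \<in> alg"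
  by (rule algI) (auto simp: mats_def diag_unit_def qgeq_refl split: if_splits)

lemma mmul_mem: assumes "X \<in> alg" "Y \<in> alg" shows "mm X Y \<in> alg"
proof (rule algI)
  show "mm X Y \<in> mats n"
    using alg_mats[OF assms(1)] alg_mats[OF assms(2)] by (auto simp: mats_def mmul_def)
next
  fix b a assume "mm X Y b a \<noteq> 0"
  then obtain k where "X b k \<noteq> 0" "Y k a \<noteq> 0"
    unfolding mmul_def by (metis (no_types, lifting) mult_not_zero sum.neutral)
  then show "ge a b" using alg_ge[OF assms(1)] alg_ge[OF assms(2)] qgeq_trans by blast
qed

lemma corner_mem: "c \<in> {1..n} \<Longrightarrow> d \<in> {1..n} \<Longrightarrow> x \<in> alg \<Longrightarrow> corner c x d \<in> alg"
  by (intro mmul_mem diag_unit_mem)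

lemma zero_mem: "0 \<in> alg"
  by (rule algI) (auto simp: mats_def)

lemma linear_comb_mem: assumes "X \<in> alg" "Y \<in> alg" shows "msmult c X + Y \<in> alg"
proof (rule algI)
  show "msmult c X + Y \<in> mats n"
    using alg_mats[OF assms(1)] alg_mats[OF assms(2)] by (auto simp: mats_def msmult_def)
next
  fix b a assume "(msmult c X + Y) b a \<noteq> 0"
  then have "X b a \<noteq> 0 \<or> Y b a \<noteq> 0" by (auto simp: msmult_def)
  then show "ge a b" using assms alg_ge by blast
qed

lemma sum_mem: "(\<And>d. d \<in> S \<Longrightarrow> Y d \<in> alg) \<Longrightarrow> sum Y S \<in> alg"
proof (induction S rule: infinite_finite_induct)
  case (insert d S)
  then have "msmult 1 (Y d) + sum Y S \<in> alg" by (intro linear_comb_mem) auto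
  then show ?case by (simp only: msmult_one sum.insert[OF insert(1,2)])
qed (auto simp: zero_mem)

lemma proj_apply: "proj X i j = (if i \<in> {1..n} \<and> j \<in> {1..n} \<and> \<not> ge j i then X i j else 0)"
  unfolding qproj_def by simp

lemma proj_idem: "proj (proj X) = proj X"
  by (simp add: fun_eq_iff proj_apply)

sublocale proj: additive proj
  by unfold_locales (simp add: fun_eq_iff proj_apply)

lemma proj_msmult: "proj (msmult c X) = msmult c (proj X)"
  by (simp add: fun_eq_iff proj_apply msmult_def)

lemma proj_mmul_proj_left: assumes "w \<in> alg" shows "proj (mm w (proj Y)) = proj (mm w Y)"
proof -
  have "proj (mm w (proj Y)) i j = proj (mm w Y) i j" for i j
  proof (cases "i \<in> {1..n} \<and> j \<in> {1..n} \<and> \<not> ge j i")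
    case True
    have "w i k * proj Y k j = w i k * Y k j" if "k \<in> {1..n}" for k
    proof (cases "w i k = 0")
      case False
      then have "\<not> ge j k" using True alg_ge[OF assms] qgeq_trans by blast
      then show ?thesis using True that by (simp add: proj_apply)
    qed simp
    then show ?thesis using True by (simp add: proj_apply mmul_def)
  qed (auto simp: proj_apply)
  then show ?thesis by (simp add: fun_eq_iff)
qed

lemma proj_mmul_proj_right: assumes "w \<in> alg" shows "proj (mm (proj Y) w) = proj (mm Y w)"
proof -
  have "proj (mm (proj Y) w) i j = proj (mm Y w) i j" for i j
  proof (cases "i \<in> {1..n} \<and> j \<in> {1..n} \<and> \<not> ge j i")
    case True
    have "proj Y i k * w k j = Y i k * w k j" if "k \<in> {1..n}" for k
    proof (cases "w k j = 0")
      case False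
      then have "\<not> ge k i" using True alg_ge[OF assms] qgeq_trans by blast
      then show ?thesis using True that by (simp add: proj_apply)
    qed simp
    then show ?thesis using True by (simp add: proj_apply mmul_def)
  qed (auto simp: proj_apply)
  then show ?thesis by (simp add: fun_eq_iff)
qed

lemma lmul_lmul: "a \<in> alg \<Longrightarrow> lmul a (lmul b m) = lmul (mm a b) m"
  unfolding lact_def by (simp add: proj_mmul_proj_left mmul_assoc)

lemma lmul_rmul: "a \<in> alg \<Longrightarrow> b \<in> alg \<Longrightarrow> lmul a (rmul m b) = rmul (lmul a m) b"
  unfolding lact_def ract_def by (simp add: proj_mmul_proj_left proj_mmul_proj_right mmul_assoc)

sublocale lmul: additive "lmul w" for w
  by unfold_locales (simp add: lact_def mmul_right.add proj.add)

sublocale rmul: additive "\<lambda>m. rmul m w" for w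
  by unfold_locales (simp add: ract_def mmul_left.add proj.add)

sublocale lmul_left: additive "\<lambda>w. lmul w m" for m
  by unfold_locales (simp add: lact_def mmul_left.add proj.add)

lemma lmul_msmult: "lmul w (msmult c m) = msmult c (lmul w m)"
  by (simp add: lact_def mmul_msmult_right proj_msmult)

lemma lmul_diag_unit_apply: "b \<in> {1..n} \<Longrightarrow>
    lmul (diag_unit b) m i j = (if i = b \<and> j \<in> {1..n} \<and> \<not> ge j b then m b j else 0)"
  by (auto simp: lact_def mmul_diag_unit_left proj_apply)

lemma rmul_diag_unit_apply: "b \<in> {1..n} \<Longrightarrow>
    rmul m (diag_unit b) i j = (if j = b \<and> i \<in> {1..n} \<and> \<not> ge b i then m i b else 0)"
  by (auto simp: ract_def mmul_diag_unit_right proj_apply)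

lemma sum_lmul_diag_unit: assumes "proj m = m" shows "(\<Sum>c\<in>{1..n}. lmul (diag_unit c) m) = m"
proof -
  have "(\<Sum>c\<in>{1..n}. lmul (diag_unit c) m i j) = (\<Sum>c\<in>{1..n}. if c = i then proj m i j else 0)" for i j
    by (rule sum.cong) (auto simp: lmul_diag_unit_apply proj_apply)
  then have "(\<Sum>c\<in>{1..n}. lmul (diag_unit c) m i j) = proj m i j" for i j
    by (simp add: proj_apply)
  then show ?thesis using assms by (simp add: fun_eq_iff sum_fun_apply)
qed

lemma corner_apply: "c \<in> {1..n} \<Longrightarrow> d \<in> {1..n} \<Longrightarrow> corner c x d = (\<lambda>i j. if i = c \<and> j = d then x c d else 0)"
  by (simp add: mmul_diag_unit_left mmul_diag_unit_right fun_eq_iff)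

lemma sum_corners: "c \<in> {1..n} \<Longrightarrow> x \<in> alg \<Longrightarrow> (\<Sum>d\<in>{1..n}. corner c x d) = mm (diag_unit c) x"
  by (intro sum_mmul_diag_unit_right alg_mats mmul_mem diag_unit_mem)

lemma sum_corner_products: assumes "c \<in> {1..n}" "x \<in> alg"
  shows "(\<Sum>d\<in>{1..n}. mm (corner c x d) (corner d z e)) = corner c (mm x z) e"
proof -
  have "(\<Sum>d\<in>{1..n}. mm (corner c x d) (corner d z e))
      = (\<Sum>d\<in>{1..n}. mm (corner c x d) (mm z (diag_unit e)))"
    by (rule sum.cong) (simp_all add: mmul_assoc diag_unit_idem flip: mmul_assoc[of n "diag_unit _" "diag_unit _"])
  also have "\<dots> = mm (mm (diag_unit c) x) (mm z (diag_unit e))"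
    by (simp only: mmul_left.sum[symmetric] sum_corners[OF assms])
  finally show ?thesis by (simp add: mmul_assoc)
qed

lemma sum_lmul_corner: assumes "x \<in> alg" "d \<in> {1..n}"
  shows "(\<Sum>c\<in>{1..n}. lmul (diag_unit c) (lmul (corner c x d) m)) = lmul x (lmul (diag_unit d) m)"
proof -
  have "(\<Sum>c\<in>{1..n}. lmul (diag_unit c) (lmul (corner c x d) m)) = (\<Sum>c\<in>{1..n}. lmul (corner c x d) m)"
    by (rule sum.cong) (simp_all add: lmul_lmul diag_unit_mem diag_unit_idem flip: mmul_assoc)
  also have "\<dots> = lmul (mm (\<Sum>c\<in>{1..n}. mm (diag_unit c) x) (diag_unit d)) m"
    by (simp only: lmul_left.sum[symmetric] mmul_left.sum[symmetric])
  also have "\<dots> = lmul x (lmul (diag_unit d) m)"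
    using assms by (simp only: sum_mmul_diag_unit_left alg_mats lmul_lmul)
  finally show ?thesis .
qed

lemma sum_lmul_corners: assumes "x \<in> alg"
  shows "(\<Sum>c\<in>{1..n}. lmul (diag_unit c) (\<Sum>d\<in>{1..n}. lmul (corner c x d) (F d)))
       = lmul x (\<Sum>d\<in>{1..n}. lmul (diag_unit d) (F d))"
proof -
  have "(\<Sum>c\<in>{1..n}. lmul (diag_unit c) (\<Sum>d\<in>{1..n}. lmul (corner c x d) (F d)))
      = (\<Sum>d\<in>{1..n}. \<Sum>c\<in>{1..n}. lmul (diag_unit c) (lmul (corner c x d) (F d)))"
    by (simp only: lmul.sum) (rule sum.swap)
  also have "\<dots> = (\<Sum>d\<in>{1..n}. lmul x (lmul (diag_unit d) (F d)))"
    by (rule sum.cong[OF refl]) (rule sum_lmul_corner[OF assms])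
  finally show ?thesis by (simp only: lmul.sum)
qed

lemma lmul_diag_unit_idem: "c \<in> {1..n} \<Longrightarrow> lmul (diag_unit c) (lmul (diag_unit c) m) = lmul (diag_unit c) m"
  by (simp add: lmul_lmul diag_unit_mem diag_unit_idem)

section \<open>Cochains and the Hochschild coboundary\<close>

definition multilinear :: "nat \<Rightarrow> ('a::comm_ring_1 mat list \<Rightarrow> 'a mat) \<Rightarrow> bool" where
  "multilinear m f \<longleftrightarrow> (\<forall>xs\<in>lists alg. length xs = m \<longrightarrow> (\<forall>k<m. \<forall>x\<in>alg. \<forall>y\<in>alg. \<forall>c.
     f (xs[k := msmult c x + y]) = msmult c (f (xs[k := x])) + f (xs[k := y])))"

lemma hcochain_iff: "hcochain n Arr t h i f \<longleftrightarrow>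
    (\<forall>xs\<in>lists alg. length xs = i \<longrightarrow> proj (f xs) = f xs) \<and> multilinear i f"
  by (simp add: hcochain_def multilinear_def quot_mod_def madd_eq_plus)

lemma multilinearD:
  "multilinear m f \<Longrightarrow> xs \<in> lists alg \<Longrightarrow> length xs = m \<Longrightarrow> k < m \<Longrightarrow> x \<in> alg \<Longrightarrow> y \<in> alg \<Longrightarrow>
   f (xs[k := msmult c x + y]) = msmult c (f (xs[k := x])) + f (xs[k := y])"
  unfolding multilinear_def by blast

lemma multilinear_Cons: "multilinear (Suc m) f \<Longrightarrow> y \<in> alg \<Longrightarrow> multilinear m (\<lambda>ws. f (y # ws))"
  unfolding multilinear_def
  by (metis (no_types, lifting) Cons_in_lists_iff Suc_less_eq length_Cons list_update_code(3))

lemma multilinear_zero_Cons: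
  assumes "multilinear (Suc (length ws)) f" "ws \<in> lists alg" shows "f (0 # ws) = 0"
proof -
  have "msmult (-1) (0::'a mat) + 0 = 0" by (simp add: msmult.zero)
  then have "f (0 # ws) = msmult (-1) (f (0 # ws)) + f (0 # ws)"
    using multilinearD[OF assms(1), of "0 # ws" 0 0 0 "-1"] assms(2) zero_mem by simp
  then show ?thesis by (simp add: fun_eq_iff msmult_def)
qed

lemma multilinear_sum_Cons:
  assumes "multilinear (Suc (length ws)) f" "ws \<in> lists alg" "\<And>d. d \<in> S \<Longrightarrow> Y d \<in> alg"
  shows "f (sum Y S # ws) = (\<Sum>d\<in>S. f (Y d # ws))"
  using assms(3)
proof (induction S rule: infinite_finite_induct)
  case (insert d S)
  have "sum Y S \<in> alg" using insert sum_mem by blast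
  then have "f ((Y d # ws)[0 := msmult 1 (Y d) + sum Y S]) = msmult 1 (f (Y d # ws)) + f (sum Y S # ws)"
    using multilinearD[OF assms(1), of "Y d # ws" 0 "Y d" "sum Y S" 1] insert assms(2) by simp
  moreover have "f (sum Y S # ws) = (\<Sum>d\<in>S. f (Y d # ws))" using insert by simp
  ultimately show ?case by (simp only: msmult_one list_update_code sum.insert[OF insert(1,2)])
qed (use multilinear_zero_Cons[OF assms(1,2)] in auto)

fun cobd_tail :: "('a::comm_ring_1 mat list \<Rightarrow> 'a mat) \<Rightarrow> 'a mat list \<Rightarrow> 'a mat" where
  "cobd_tail f [] = 0"
| "cobd_tail f [x] = - rmul (f []) x"
| "cobd_tail f (x # y # zs) = - f (mm x y # zs) - cobd_tail (\<lambda>ws. f (x # ws)) (y # zs)"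

definition cobd :: "('a::comm_ring_1 mat list \<Rightarrow> 'a mat) \<Rightarrow> 'a mat list \<Rightarrow> 'a mat" where
  "cobd f xs = lmul (hd xs) (f (tl xs)) + cobd_tail f xs"

lemma cobd_Cons: "cobd f (x # xs) = lmul x (f xs) + cobd_tail f (x # xs)"
  by (simp add: cobd_def)

lemma cobd_Cons_Cons:
  "cobd f (y # w # ws) = lmul y (f (w # ws)) - f (mm y w # ws) - cobd (\<lambda>vs. f (y # vs)) (w # ws) + lmul w (f (y # ws))"
  by (simp add: cobd_Cons)

lemma cobd_tail_apply:
  "length xs = Suc m \<Longrightarrow> cobd_tail f xs r s =
     (\<Sum>k\<in>{1..m}. (-1) ^ k * f (take (k - 1) xs @ [mm (xs ! (k - 1)) (xs ! k)] @ drop (k + 1) xs) r s)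
     + (-1) ^ (m + 1) * rmul (f (take m xs)) (xs ! m) r s"
proof (induction m arbitrary: f xs)
  case 0
  then obtain x where "xs = [x]" by (cases xs) auto
  then show ?case by simp
next
  case (Suc m)
  then obtain x ys where xs: "xs = x # ys" and ly: "length ys = Suc m"
    by (cases xs) auto
  then obtain y zs where ys: "ys = y # zs" by (cases ys) auto
  define T where "T k = (-1) ^ k * f (take (k - 1) xs @ [mm (xs ! (k - 1)) (xs ! k)] @ drop (k + 1) xs) r s" for k
  have "sum T {1..Suc m} = T 1 + sum T {Suc 1..Suc m}"
    by (rule sum.atLeast_Suc_atMost) simp
  also have "sum T {Suc 1..Suc m} = sum (\<lambda>k. T (Suc k)) {1..m}"
    by (rule sum.shift_bounds_cl_Suc_ivl)
  also have "sum (\<lambda>k. T (Suc k)) {1..m} =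
      - (\<Sum>k\<in>{1..m}. (-1) ^ k * f (x # (take (k - 1) ys @ [mm (ys ! (k - 1)) (ys ! k)] @ drop (k + 1) ys)) r s)"
  proof -
    have "T (Suc k) = - ((-1) ^ k * f (x # (take (k - 1) ys @ [mm (ys ! (k - 1)) (ys ! k)] @ drop (k + 1) ys)) r s)"
      if "k \<in> {1..m}" for k
      using that by (cases k) (auto simp: T_def xs)
    then show ?thesis by (simp add: sum_negf)
  qed
  finally have "sum T {1..Suc m} = - f (mm x y # zs) r s
      - (\<Sum>k\<in>{1..m}. (-1) ^ k * f (x # (take (k - 1) ys @ [mm (ys ! (k - 1)) (ys ! k)] @ drop (k + 1) ys)) r s)"
    by (simp add: T_def xs ys)
  moreover have "cobd_tail f xs r s = - f (mm x y # zs) r s - cobd_tail (\<lambda>ws. f (x # ws)) ys r s"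
    by (simp add: xs ys)
  ultimately show ?case
    using Suc.IH[OF ly, of "\<lambda>ws. f (x # ws)"] by (simp add: T_def xs)
qed

lemma hdiff_eq_cobd: "length xs = Suc m \<Longrightarrow> hdiff n Arr t h m f xs = cobd f xs"
  by (cases xs) (auto simp: fun_eq_iff hdiff_def cobd_def cobd_tail_apply)

sublocale cobd_tail: additive "\<lambda>f. cobd_tail f xs" for xs
proof
  show "cobd_tail (f + g) xs = cobd_tail f xs + cobd_tail g xs" for f g :: "'a mat list \<Rightarrow> 'a mat"
  proof (induction xs arbitrary: f g rule: induct_list012)
    case (3 x y zs)
    have "(\<lambda>ws. (f + g) (x # ws)) = (\<lambda>ws. f (x # ws)) + (\<lambda>ws. g (x # ws))" by (simp add: fun_eq_iff)
    then show ?case using "3.IH"(2) by (simp add: algebra_simps)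
  qed (simp_all add: rmul.add)
qed

lemma cobd_tail_lmul: "w \<in> alg \<Longrightarrow> xs \<in> lists alg \<Longrightarrow> cobd_tail (\<lambda>ws. lmul w (f ws)) xs = lmul w (cobd_tail f xs)"
  by (induction f xs rule: cobd_tail.induct) (simp_all add: lmul.diff lmul.minus lmul.zero lmul_rmul)

section \<open>The contracting homotopy\<close>

text \<open>As simplification rules, the pointwise evaluation laws would eta-expand every
  matrix-valued sum or difference in the computations below.\<close>

declare plus_fun_apply [simp del] minus_apply [simp del] uminus_apply [simp del] zero_fun_apply [simp del]

text \<open>Unfolding the recursions, \<open>homotopy f [y\<^sub>1, \<dots>, y\<^sub>m]\<close> is the sum over \<open>j\<close> and over chains
  \<open>c\<^sub>0, \<dots>, c\<^sub>j\<close> of \<open>(-1)\<^sup>j E c\<^sub>0 * f [E c\<^sub>0 * y\<^sub>1 * E c\<^sub>1, \<dots>, E c\<^sub>j\<^sub>-\<^sub>1 * y\<^sub>j * E c\<^sub>j, E c\<^sub>j, y\<^sub>j\<^sub>+\<^sub>1, \<dots>, y\<^sub>m]\<close>,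
  and \<open>normalized c f [x\<^sub>1, \<dots>, x\<^sub>k]\<close> is the sum over chains \<open>c = c\<^sub>0, \<dots>, c\<^sub>k\<close> of
  \<open>f [E c\<^sub>0 * x\<^sub>1 * E c\<^sub>1, \<dots>, E c\<^sub>k\<^sub>-\<^sub>1 * x\<^sub>k * E c\<^sub>k] * E c\<^sub>k\<close>.\<close>

fun homotopy_at :: "nat \<Rightarrow> ('a::comm_ring_1 mat list \<Rightarrow> 'a mat) \<Rightarrow> 'a mat list \<Rightarrow> 'a mat" where
  "homotopy_at c f [] = f [diag_unit c]"
| "homotopy_at c f (y # ys) =
     f (diag_unit c # y # ys) - (\<Sum>d\<in>{1..n}. homotopy_at d (\<lambda>ws. f (corner c y d # ws)) ys)"

definition homotopy :: "('a::comm_ring_1 mat list \<Rightarrow> 'a mat) \<Rightarrow> 'a mat list \<Rightarrow> 'a mat" where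
  "homotopy f xs = (\<Sum>c\<in>{1..n}. lmul (diag_unit c) (homotopy_at c f xs))"

fun normalized :: "nat \<Rightarrow> ('a::comm_ring_1 mat list \<Rightarrow> 'a mat) \<Rightarrow> 'a mat list \<Rightarrow> 'a mat" where
  "normalized c f [] = rmul (f []) (diag_unit c)"
| "normalized c f (x # xs) = (\<Sum>d\<in>{1..n}. normalized d (\<lambda>ws. f (corner c x d # ws)) xs)"

lemma homotopy_at_cong_Cons:
  "(\<And>w ws. f (w # ws) = g (w # ws)) \<Longrightarrow> homotopy_at c f xs = homotopy_at c g xs"
proof (induction xs arbitrary: c f g)
  case (Cons y ys)
  have "homotopy_at d (\<lambda>ws. f (corner c y d # ws)) ys = homotopy_at d (\<lambda>ws. g (corner c y d # ws)) ys" for d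
    by (rule Cons.IH) (simp only: Cons.prems)
  then show ?case by (simp only: homotopy_at.simps Cons.prems)
qed (simp only: homotopy_at.simps)

lemma homotopy_at_cong:
  "(\<And>ws. ws \<in> lists alg \<Longrightarrow> length ws = Suc (length xs) \<Longrightarrow> f ws = g ws) \<Longrightarrow> xs \<in> lists alg \<Longrightarrow>
   c \<in> {1..n} \<Longrightarrow> homotopy_at c f xs = homotopy_at c g xs"
proof (induction xs arbitrary: c f g)
  case Nil
  have "[diag_unit c :: 'a mat] \<in> lists alg" using diag_unit_mem[OF Nil.prems(3)] by simp
  then show ?case using Nil.prems(1) by simp
next
  case (Cons y ys)
  have "homotopy_at d (\<lambda>ws. f (corner c y d # ws)) ys = homotopy_at d (\<lambda>ws. g (corner c y d # ws)) ys"
    if "d \<in> {1..n}" for d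
  proof (rule Cons.IH)
    fix ws :: "'a mat list" assume "ws \<in> lists alg" "length ws = Suc (length ys)"
    moreover have "corner c y d \<in> alg"
      using Cons.prems(2) by (intro corner_mem[OF Cons.prems(3) that]) simp
    ultimately show "f (corner c y d # ws) = g (corner c y d # ws)"
      using Cons.prems(1) by simp
  qed (use Cons.prems that in auto)
  moreover have "f (diag_unit c # y # ys) = g (diag_unit c # y # ys)"
    using Cons.prems(1)[of "diag_unit c # y # ys"] Cons.prems(2) diag_unit_mem[OF Cons.prems(3)] by simp
  ultimately show ?case by simp
qed

lemma homotopy_at_add: "homotopy_at c (\<lambda>ws. f ws + g ws) xs = homotopy_at c f xs + homotopy_at c g xs"
proof (induction xs arbitrary: c f g)
  case (Cons y ys)
  then show ?case by (simp only: homotopy_at.simps sum.distrib) (simp add: algebra_simps)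
qed (simp only: homotopy_at.simps)

sublocale homotopy_at: additive "\<lambda>f. homotopy_at c f xs" for c xs
proof
  show "homotopy_at c (f + g) xs = homotopy_at c f xs + homotopy_at c g xs" for f g :: "'a mat list \<Rightarrow> 'a mat"
    unfolding plus_fun_def[of f g] by (rule homotopy_at_add)
qed

lemma homotopy_at_lmul: "homotopy_at c (\<lambda>ws. lmul w (f ws)) xs = lmul w (homotopy_at c f xs)"
  by (induction xs arbitrary: c f) (simp_all add: lmul.diff lmul.sum)

lemma homotopy_at_diff: "homotopy_at c (\<lambda>ws. f ws - g ws) xs = homotopy_at c f xs - homotopy_at c g xs"
  using homotopy_at.diff[of c f g] by (simp add: fun_diff_def)

lemma homotopy_at_sum: "homotopy_at c (\<lambda>ws. \<Sum>e\<in>S. F e ws) xs = (\<Sum>e\<in>S. homotopy_at c (F e) xs)"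
proof -
  have "(\<lambda>ws. \<Sum>e\<in>S. F e ws) = sum F S" by (simp add: fun_eq_iff sum_fun_apply)
  then show ?thesis by (simp add: homotopy_at.sum)
qed

lemma homotopy_at_msmult: "homotopy_at c (\<lambda>ws. msmult a (f ws)) xs = msmult a (homotopy_at c f xs)"
  by (induction xs arbitrary: c f) (simp_all add: msmult.diff msmult.sum)

lemma corner_linear: "corner c (msmult a x + y) d = msmult a (corner c x d) + corner c y d"
  by (simp add: mmul_left.add mmul_right.add mmul_msmult_left mmul_msmult_right)

lemma homotopy_at_corner_linear:
  assumes f_lin: "multilinear (Suc (Suc (length ws))) f" and ws: "ws \<in> lists alg"
    and x: "x \<in> alg" and y: "y \<in> alg" and c: "c \<in> {1..n}" and d: "d \<in> {1..n}"
  shows "homotopy_at d (\<lambda>vs. f (corner c (msmult a x + y) d # vs)) ws =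
      msmult a (homotopy_at d (\<lambda>vs. f (corner c x d # vs)) ws) + homotopy_at d (\<lambda>vs. f (corner c y d # vs)) ws"
proof -
  have "homotopy_at d (\<lambda>vs. f (corner c (msmult a x + y) d # vs)) ws
      = homotopy_at d (\<lambda>vs. msmult a (f (corner c x d # vs)) + f (corner c y d # vs)) ws"
  proof (rule homotopy_at_cong[OF _ ws d])
    fix vs :: "'a mat list" assume vs: "vs \<in> lists alg" "length vs = Suc (length ws)"
    have "f ((corner c x d # vs)[0 := msmult a (corner c x d) + corner c y d])
        = msmult a (f ((corner c x d # vs)[0 := corner c x d])) + f ((corner c x d # vs)[0 := corner c y d])"
      by (rule multilinearD[OF f_lin]) (use vs corner_mem[OF c d x] corner_mem[OF c d y] in auto)
    then show "f (corner c (msmult a x + y) d # vs) = msmult a (f (corner c x d # vs)) + f (corner c y d # vs)"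
      by (simp add: corner_linear)
  qed
  then show ?thesis by (simp only: homotopy_at_add homotopy_at_msmult)
qed

lemma homotopy_at_linear:
  assumes "multilinear (Suc (length ws)) f" "ws \<in> lists alg" "k < length ws" "x \<in> alg" "y \<in> alg" "c \<in> {1..n}"
  shows "homotopy_at c f (ws[k := msmult a x + y]) = msmult a (homotopy_at c f (ws[k := x])) + homotopy_at c f (ws[k := y])"
  using assms
proof (induction ws arbitrary: f c k)
  case (Cons w ws)
  note f_lin = Cons.prems(1) and x = Cons.prems(4) and y = Cons.prems(5) and c = Cons.prems(6)
  have w: "w \<in> alg" and ws: "ws \<in> lists alg" using Cons.prems(2) by auto
  have regroup: "(msmult a F1 + F2) - (msmult a S1 + S2) = msmult a (F1 - S1) + (F2 - S2)" for F1 F2 S1 S2 :: "'a mat"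
    by (simp add: msmult.diff algebra_simps)
  have head: "f (diag_unit c # (w # ws)[k := msmult a x + y])
      = msmult a (f (diag_unit c # (w # ws)[k := x])) + f (diag_unit c # (w # ws)[k := y])"
    using multilinearD[OF f_lin, of "diag_unit c # w # ws" "Suc k" x y a] Cons.prems(3) diag_unit_mem[OF c] w ws x y
    by simp
  show ?case
  proof (cases k)
    case 0
    have "homotopy_at c f ((msmult a x + y) # ws) = msmult a (homotopy_at c f (x # ws)) + homotopy_at c f (y # ws)"
      using head 0 by (simp only: homotopy_at.simps list_update_code sum.distrib msmult.sum[symmetric] regroup
          sum.cong[OF refl homotopy_at_corner_linear[OF f_lin[simplified] ws x y c]])
    then show ?thesis using 0 by simp
  next
    case (Suc k')
    have tail: "homotopy_at d (\<lambda>vs. f (corner c w d # vs)) (ws[k' := msmult a x + y]) =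
        msmult a (homotopy_at d (\<lambda>vs. f (corner c w d # vs)) (ws[k' := x]))
        + homotopy_at d (\<lambda>vs. f (corner c w d # vs)) (ws[k' := y])"
      if d: "d \<in> {1..n}" for d
      using Cons.IH[OF multilinear_Cons[OF _ corner_mem[OF c d w]] ws _ x y d] f_lin Cons.prems(3) Suc by simp
    have "homotopy_at c f (w # ws[k' := msmult a x + y]) = msmult a (homotopy_at c f (w # ws[k' := x])) + homotopy_at c f (w # ws[k' := y])"
      using head Suc by (simp only: homotopy_at.simps list_update_code sum.cong[OF refl tail] sum.distrib
          msmult.sum[symmetric] regroup)
    then show ?thesis using Suc by simp
  qed
qed simp

lemma multilinear_homotopy: assumes "multilinear (Suc m) f" shows "multilinear m (homotopy f)"
  unfolding multilinear_def
proof (intro ballI impI allI)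
  fix xs :: "'a mat list" and k :: nat and x y :: "'a mat" and a :: 'a
  assume xs: "xs \<in> lists alg" "length xs = m" "k < m" and xy: "x \<in> alg" "y \<in> alg"
  have "homotopy_at c f (xs[k := msmult a x + y]) = msmult a (homotopy_at c f (xs[k := x])) + homotopy_at c f (xs[k := y])"
    if "c \<in> {1..n}" for c
    by (rule homotopy_at_linear) (use assms xs xy that in auto)
  then show "homotopy f (xs[k := msmult a x + y]) = msmult a (homotopy f (xs[k := x])) + homotopy f (xs[k := y])"
    unfolding homotopy_def by (simp add: lmul.add lmul_msmult sum.distrib msmult.sum)
qed

lemma proj_homotopy: "proj (homotopy f xs) = homotopy f xs"
  unfolding homotopy_def lact_def by (simp add: proj.sum proj_idem)

lemma normalized_eq_0:
  "(\<And>ws. ws \<in> lists alg \<Longrightarrow> length ws = length xs \<Longrightarrow> f ws = 0) \<Longrightarrow> xs \<in> lists alg \<Longrightarrow>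
   c \<in> {1..n} \<Longrightarrow> normalized c f xs = 0"
proof (induction xs arbitrary: c f)
  case Nil
  then show ?case by (simp add: rmul.zero)
next
  case (Cons y ys)
  have "normalized d (\<lambda>ws. f (corner c y d # ws)) ys = 0" if "d \<in> {1..n}" for d
  proof (rule Cons.IH)
    fix ws :: "'a mat list" assume "ws \<in> lists alg" "length ws = length ys"
    moreover have "corner c y d \<in> alg"
      using Cons.prems(2) by (intro corner_mem[OF Cons.prems(3) that]) simp
    ultimately show "f (corner c y d # ws) = 0" using Cons.prems(1) by simp
  qed (use Cons.prems that in auto)
  then show ?case by simp
qed

text \<open>A nonzero corner \<open>E c * x * E d\<close> forces \<open>d \<ge> c\<close>, so the chain ends at some \<open>c\<^sub>k \<ge> c \<ge> b\<close>
  and \<open>E b * m * E c\<^sub>k = 0\<close> in the quotient.\<close>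

lemma lmul_normalized_eq_0:
  assumes "multilinear (length xs) g" "xs \<in> lists alg" "c \<in> {1..n}" "b \<in> {1..n}" "ge c b"
  shows "lmul (diag_unit b) (normalized c g xs) = 0"
  using assms
proof (induction xs arbitrary: g c)
  case Nil
  have "lmul (diag_unit b) (rmul (g []) (diag_unit c)) i j = 0" for i j
    using Nil.prems(3-5) by (simp add: lmul_diag_unit_apply rmul_diag_unit_apply)
  then show ?case by (simp add: fun_eq_iff zero_fun_apply)
next
  case (Cons x xs)
  have x: "x \<in> alg" and xs: "xs \<in> lists alg" using Cons.prems(2) by auto
  have "lmul (diag_unit b) (normalized d (\<lambda>ws. g (corner c x d # ws)) xs) = 0" if d: "d \<in> {1..n}" for d
  proof (cases "x c d = 0")
    case True
    then have "corner c x d = 0" using Cons.prems(3) d by (simp add: corner_apply fun_eq_iff zero_fun_apply)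
    moreover have "g (0 # ws) = 0" if "ws \<in> lists alg" "length ws = length xs" for ws
      using multilinear_zero_Cons[of ws g] Cons.prems(1) that by simp
    ultimately have "normalized d (\<lambda>ws. g (corner c x d # ws)) xs = 0"
      using normalized_eq_0[OF _ xs d] by simp
    then show ?thesis by (simp add: lmul.zero)
  next
    case False
    then have "ge d b" using alg_ge[OF x] Cons.prems(5) qgeq_trans by blast
    moreover have "multilinear (length xs) (\<lambda>ws. g (corner c x d # ws))"
      using multilinear_Cons Cons.prems(1) corner_mem[OF Cons.prems(3) d x] by simp
    ultimately show ?thesis using Cons.IH xs d Cons.prems(4) by blast
  qed
  then show ?case by (simp add: lmul.sum)
qed

lemma cobd_tail_homotopy_at_Cons_Cons:
  "cobd_tail (homotopy_at c f) (x # z # zt) =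
     - f (diag_unit c # mm x z # zt) + (\<Sum>d\<in>{1..n}. homotopy_at d (\<lambda>vs. f (corner c (mm x z) d # vs)) zt)
     - cobd_tail (\<lambda>ws. f (diag_unit c # x # ws)) (z # zt)
     + (\<Sum>d\<in>{1..n}. cobd_tail (homotopy_at d (\<lambda>vs. f (corner c x d # vs))) (z # zt))"
proof -
  have "(\<lambda>ws. homotopy_at c f (x # ws))
      = (\<lambda>ws. f (diag_unit c # x # ws)) - (\<Sum>d\<in>{1..n}. homotopy_at d (\<lambda>vs. f (corner c x d # vs)))"
    by (simp add: fun_eq_iff minus_apply sum_fun_apply)
  then have "cobd_tail (\<lambda>ws. homotopy_at c f (x # ws)) (z # zt)
      = cobd_tail (\<lambda>ws. f (diag_unit c # x # ws)) (z # zt)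
        - (\<Sum>d\<in>{1..n}. cobd_tail (homotopy_at d (\<lambda>vs. f (corner c x d # vs))) (z # zt))"
    by (simp only: cobd_tail.diff cobd_tail.sum)
  then show ?thesis by (simp add: algebra_simps)
qed

lemma homotopy_at_cobd_slice:
  fixes Y :: "'a::comm_ring_1 mat"
  assumes "mm Y (diag_unit d) = Y"
    and IH: "homotopy_at d (cobd (\<lambda>vs. f (Y # vs))) (z # zt) + cobd_tail (homotopy_at d (\<lambda>vs. f (Y # vs))) (z # zt)
      = lmul (diag_unit d) (f (Y # z # zt))
        - (\<Sum>e\<in>{1..n}. lmul (corner d z e) (homotopy_at e (\<lambda>vs. f (Y # vs)) zt)
             + normalized e (\<lambda>ws. f (Y # corner d z e # ws)) zt)"
  shows "homotopy_at d (\<lambda>ws. cobd f (Y # ws)) (z # zt) =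
      lmul Y (homotopy_at d f (z # zt)) - f (Y # z # zt)
      + (\<Sum>e\<in>{1..n}. homotopy_at e (\<lambda>vs. f (mm Y (corner d z e) # vs)) zt)
      + cobd_tail (homotopy_at d (\<lambda>vs. f (Y # vs))) (z # zt)
      + (\<Sum>e\<in>{1..n}. normalized e (\<lambda>vs. f (Y # corner d z e # vs)) zt)"
proof -
  have IH': "homotopy_at d (cobd (\<lambda>vs. f (Y # vs))) (z # zt)
      = lmul (diag_unit d) (f (Y # z # zt))
        - (\<Sum>e\<in>{1..n}. lmul (corner d z e) (homotopy_at e (\<lambda>vs. f (Y # vs)) zt)
             + normalized e (\<lambda>ws. f (Y # corner d z e # ws)) zt)
        - cobd_tail (homotopy_at d (\<lambda>vs. f (Y # vs))) (z # zt)"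
    using IH by (simp only: eq_diff_eq)
  have "homotopy_at d (\<lambda>ws. cobd f (Y # ws)) (z # zt) = homotopy_at d (\<lambda>ws. lmul Y (f ws)
      - f (mm Y (hd ws) # tl ws) - cobd (\<lambda>vs. f (Y # vs)) ws + lmul (hd ws) (f (Y # tl ws))) (z # zt)"
    by (rule homotopy_at_cong_Cons) (simp only: cobd_Cons_Cons list.sel)
  also have "\<dots> = lmul Y (homotopy_at d f (z # zt)) - homotopy_at d (\<lambda>ws. f (mm Y (hd ws) # tl ws)) (z # zt)
      - homotopy_at d (cobd (\<lambda>vs. f (Y # vs))) (z # zt)
      + homotopy_at d (\<lambda>ws. lmul (hd ws) (f (Y # tl ws))) (z # zt)"
    by (simp only: homotopy_at_add homotopy_at_diff homotopy_at_lmul)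
  also have "homotopy_at d (\<lambda>ws. f (mm Y (hd ws) # tl ws)) (z # zt)
      = f (Y # z # zt) - (\<Sum>e\<in>{1..n}. homotopy_at e (\<lambda>vs. f (mm Y (corner d z e) # vs)) zt)"
    using assms(1) by (simp add: mmul_assoc[symmetric])
  also have "homotopy_at d (\<lambda>ws. lmul (hd ws) (f (Y # tl ws))) (z # zt)
      = lmul (diag_unit d) (f (Y # z # zt)) - (\<Sum>e\<in>{1..n}. lmul (corner d z e) (homotopy_at e (\<lambda>vs. f (Y # vs)) zt))"
    by (simp only: homotopy_at.simps list.sel homotopy_at_lmul)
  finally show ?thesis by (simp add: IH' sum.distrib algebra_simps del: homotopy_at.simps)
qed

lemma sum_homotopy_at_corner_products:
  assumes "multilinear (Suc (Suc (length zt))) f" "x \<in> alg" "z \<in> alg" "zt \<in> lists alg" "c \<in> {1..n}"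
  shows "(\<Sum>d\<in>{1..n}. \<Sum>e\<in>{1..n}. homotopy_at e (\<lambda>vs. f (mm (corner c x d) (corner d z e) # vs)) zt)
       = (\<Sum>e\<in>{1..n}. homotopy_at e (\<lambda>vs. f (corner c (mm x z) e # vs)) zt)"
proof -
  have "(\<Sum>d\<in>{1..n}. homotopy_at e (\<lambda>vs. f (mm (corner c x d) (corner d z e) # vs)) zt)
      = homotopy_at e (\<lambda>vs. f (corner c (mm x z) e # vs)) zt" if e: "e \<in> {1..n}" for e
  proof -
    have "(\<Sum>d\<in>{1..n}. homotopy_at e (\<lambda>vs. f (mm (corner c x d) (corner d z e) # vs)) zt)
        = homotopy_at e (\<lambda>vs. \<Sum>d\<in>{1..n}. f (mm (corner c x d) (corner d z e) # vs)) zt"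
      by (simp only: homotopy_at_sum)
    also have "\<dots> = homotopy_at e (\<lambda>vs. f (corner c (mm x z) e # vs)) zt"
    proof (rule homotopy_at_cong[OF _ assms(4) e])
      fix vs :: "'a mat list" assume vs: "vs \<in> lists alg" "length vs = Suc (length zt)"
      have "mm (corner c x d) (corner d z e) \<in> alg" if "d \<in> {1..n}" for d
        using corner_mem[OF assms(5) that assms(2)] corner_mem[OF that e assms(3)] by (rule mmul_mem)
      then have "f ((\<Sum>d\<in>{1..n}. mm (corner c x d) (corner d z e)) # vs)
          = (\<Sum>d\<in>{1..n}. f (mm (corner c x d) (corner d z e) # vs))"
        by (intro multilinear_sum_Cons) (use assms vs in auto)
      then show "(\<Sum>d\<in>{1..n}. f (mm (corner c x d) (corner d z e) # vs)) = f (corner c (mm x z) e # vs)"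
        using sum_corner_products[OF assms(5,2)] by simp
    qed
    finally show ?thesis .
  qed
  then show ?thesis by (subst sum.swap) (rule sum.cong[OF refl])
qed

lemma homotopy_at_cobd_single:
  assumes f_lin: "multilinear 1 f" and x: "x \<in> alg" and c: "c \<in> {1..n}"
  shows "homotopy_at c (cobd f) [x] + cobd_tail (homotopy_at c f) [x]
       = lmul (diag_unit c) (f [x])
         - (\<Sum>d\<in>{1..n}. lmul (corner c x d) (homotopy_at d f []) + normalized d (\<lambda>ws. f (corner c x d # ws)) [])"
proof -
  have "f [sum (corner c x) {1..n}] = (\<Sum>d\<in>{1..n}. f [corner c x d])"
    by (rule multilinear_sum_Cons) (use f_lin corner_mem[OF c _ x] in auto)
  then have sum_f: "(\<Sum>d\<in>{1..n}. f [corner c x d]) = f [mm (diag_unit c) x]"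
    by (simp only: sum_corners[OF c x])
  have "homotopy_at d (\<lambda>ws. cobd f (corner c x d # ws)) []
      = lmul (corner c x d) (homotopy_at d f []) + normalized d (\<lambda>ws. f (corner c x d # ws)) [] - f [corner c x d]"
    if d: "d \<in> {1..n}" for d
  proof -
    have "mm (corner c x d) (diag_unit d) = corner c x d" using d by (simp add: mmul_assoc diag_unit_idem)
    then show ?thesis by (simp add: cobd_Cons)
  qed
  then have "(\<Sum>d\<in>{1..n}. homotopy_at d (\<lambda>ws. cobd f (corner c x d # ws)) [])
      = (\<Sum>d\<in>{1..n}. lmul (corner c x d) (homotopy_at d f []) + normalized d (\<lambda>ws. f (corner c x d # ws)) []
           - f [corner c x d])"
    by (rule sum.cong[OF refl])
  also have "\<dots> = (\<Sum>d\<in>{1..n}. lmul (corner c x d) (homotopy_at d f []) + normalized d (\<lambda>ws. f (corner c x d # ws)) [])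
      - f [mm (diag_unit c) x]"
    by (simp only: sum_subtractf sum_f)
  finally have sum_slices: "(\<Sum>d\<in>{1..n}. homotopy_at d (\<lambda>ws. cobd f (corner c x d # ws)) []) = \<dots>" .
  have "cobd f [diag_unit c, x] = lmul (diag_unit c) (f [x]) - f [mm (diag_unit c) x] + rmul (f [diag_unit c]) x"
    by (simp add: cobd_Cons)
  then show ?thesis
    by (simp only: homotopy_at.simps(2) sum_slices cobd_tail.simps(2)) (simp add: algebra_simps)
qed

lemma sum_homotopy_at_cobd_slices:
  assumes f_lin: "multilinear (Suc (Suc (length zt))) f"
    and x: "x \<in> alg" and z: "z \<in> alg" and zt: "zt \<in> lists alg" and c: "c \<in> {1..n}"
    and IH: "\<And>g d. multilinear (Suc (length zt)) g \<Longrightarrow> d \<in> {1..n} \<Longrightarrow>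
      homotopy_at d (cobd g) (z # zt) + cobd_tail (homotopy_at d g) (z # zt)
      = lmul (diag_unit d) (g (z # zt))
        - (\<Sum>e\<in>{1..n}. lmul (corner d z e) (homotopy_at e g zt) + normalized e (\<lambda>ws. g (corner d z e # ws)) zt)"
  shows "(\<Sum>d\<in>{1..n}. homotopy_at d (\<lambda>ws. cobd f (corner c x d # ws)) (z # zt))
      = (\<Sum>d\<in>{1..n}. lmul (corner c x d) (homotopy_at d f (z # zt))) - f (mm (diag_unit c) x # z # zt)
        + (\<Sum>e\<in>{1..n}. homotopy_at e (\<lambda>vs. f (corner c (mm x z) e # vs)) zt)
        + (\<Sum>d\<in>{1..n}. cobd_tail (homotopy_at d (\<lambda>vs. f (corner c x d # vs))) (z # zt))
        + (\<Sum>d\<in>{1..n}. normalized d (\<lambda>ws. f (corner c x d # ws)) (z # zt))"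
proof -
  have "f (sum (corner c x) {1..n} # z # zt) = (\<Sum>d\<in>{1..n}. f (corner c x d # z # zt))"
    by (rule multilinear_sum_Cons) (use f_lin z zt corner_mem[OF c _ x] in auto)
  then have sum_f: "(\<Sum>d\<in>{1..n}. f (corner c x d # z # zt)) = f (mm (diag_unit c) x # z # zt)"
    by (simp only: sum_corners[OF c x])
  have "(\<Sum>d\<in>{1..n}. homotopy_at d (\<lambda>ws. cobd f (corner c x d # ws)) (z # zt))
      = (\<Sum>d\<in>{1..n}. lmul (corner c x d) (homotopy_at d f (z # zt)) - f (corner c x d # z # zt)
      + (\<Sum>e\<in>{1..n}. homotopy_at e (\<lambda>vs. f (mm (corner c x d) (corner d z e) # vs)) zt)
      + cobd_tail (homotopy_at d (\<lambda>vs. f (corner c x d # vs))) (z # zt)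
      + (\<Sum>e\<in>{1..n}. normalized e (\<lambda>vs. f (corner c x d # corner d z e # vs)) zt))"
  proof (rule sum.cong[OF refl], rule homotopy_at_cobd_slice)
    show "mm (corner c x d) (diag_unit d) = corner c x d" if "d \<in> {1..n}" for d
      using that by (simp add: mmul_assoc diag_unit_idem)
  qed (rule IH[OF multilinear_Cons[OF f_lin corner_mem[OF c _ x]]])
  also have "\<dots> = (\<Sum>d\<in>{1..n}. lmul (corner c x d) (homotopy_at d f (z # zt))) - f (mm (diag_unit c) x # z # zt)
      + (\<Sum>e\<in>{1..n}. homotopy_at e (\<lambda>vs. f (corner c (mm x z) e # vs)) zt)
      + (\<Sum>d\<in>{1..n}. cobd_tail (homotopy_at d (\<lambda>vs. f (corner c x d # vs))) (z # zt))
      + (\<Sum>d\<in>{1..n}. normalized d (\<lambda>ws. f (corner c x d # ws)) (z # zt))"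
    by (simp only: sum.distrib sum_subtractf sum_f normalized.simps(2)
        sum_homotopy_at_corner_products[OF f_lin x z zt c])
  finally show ?thesis .
qed

text \<open>Multiplying by \<open>E c\<close> on the left and summing over \<open>c\<close> turns this into \<open>h d + d h = id\<close>; the
  \<open>normalized\<close> terms are exactly the error, which vanishes by \<open>lmul_normalized_eq_0\<close>.\<close>

lemma homotopy_at_cobd:
  assumes "multilinear (Suc (length xs)) f" "x \<in> alg" "xs \<in> lists alg" "c \<in> {1..n}"
  shows "homotopy_at c (cobd f) (x # xs) + cobd_tail (homotopy_at c f) (x # xs)
       = lmul (diag_unit c) (f (x # xs))
         - (\<Sum>d\<in>{1..n}. lmul (corner c x d) (homotopy_at d f xs) + normalized d (\<lambda>ws. f (corner c x d # ws)) xs)"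
  using assms
proof (induction xs arbitrary: f c x)
  case Nil
  then show ?case using homotopy_at_cobd_single by simp
next
  case (Cons z zt)
  note f_lin = Cons.prems(1) and x = Cons.prems(2) and c = Cons.prems(4)
  have z: "z \<in> alg" and zt: "zt \<in> lists alg" using Cons.prems(3) by auto
  have "homotopy_at c (cobd f) (x # z # zt)
      = cobd f (diag_unit c # x # z # zt) - (\<Sum>d\<in>{1..n}. homotopy_at d (\<lambda>ws. cobd f (corner c x d # ws)) (z # zt))"
    by (simp only: homotopy_at.simps)
  moreover have "cobd f (diag_unit c # x # z # zt) = lmul (diag_unit c) (f (x # z # zt)) - f (mm (diag_unit c) x # z # zt)
      + f (diag_unit c # mm x z # zt) + cobd_tail (\<lambda>ws. f (diag_unit c # x # ws)) (z # zt)"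
    by (simp add: cobd_Cons)
  ultimately show ?case
    by (simp only: sum_homotopy_at_cobd_slices[OF f_lin[simplified] x z zt c Cons.IH[OF _ z zt]]
        cobd_tail_homotopy_at_Cons_Cons sum.distrib) (simp add: algebra_simps)
qed

lemma cobd_homotopy_add_homotopy_cobd:
  assumes f_lin: "multilinear (Suc (length xs)) f" and x: "x \<in> alg" and xs: "xs \<in> lists alg"
    and f_val: "proj (f (x # xs)) = f (x # xs)"
  shows "cobd (homotopy f) (x # xs) + homotopy (cobd f) (x # xs) = f (x # xs)"
proof -
  let ?E = "diag_unit :: nat \<Rightarrow> 'a mat"
  have "homotopy f = (\<Sum>c\<in>{1..n}. (\<lambda>ys. lmul (?E c) (homotopy_at c f ys)))"
    by (simp add: fun_eq_iff homotopy_def sum_fun_apply)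
  then have "cobd_tail (homotopy f) (x # xs) = (\<Sum>c\<in>{1..n}. lmul (?E c) (cobd_tail (homotopy_at c f) (x # xs)))"
    using x xs by (simp add: cobd_tail.sum cobd_tail_lmul diag_unit_mem)
  then have "cobd_tail (homotopy f) (x # xs) + homotopy (cobd f) (x # xs)
      = (\<Sum>c\<in>{1..n}. lmul (?E c) (homotopy_at c (cobd f) (x # xs) + cobd_tail (homotopy_at c f) (x # xs)))"
    by (simp add: homotopy_def lmul.add sum.distrib)
  also have "\<dots> = (\<Sum>c\<in>{1..n}. lmul (?E c) (lmul (?E c) (f (x # xs))))
      - (\<Sum>c\<in>{1..n}. lmul (?E c) (\<Sum>d\<in>{1..n}. lmul (corner c x d) (homotopy_at d f xs)))
      - (\<Sum>c\<in>{1..n}. lmul (?E c) (normalized c f (x # xs)))"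
    using homotopy_at_cobd[OF f_lin x xs]
    by (simp add: lmul.diff lmul.add lmul.sum sum.distrib sum_subtractf del: homotopy_at.simps)
  also have "(\<Sum>c\<in>{1..n}. lmul (?E c) (lmul (?E c) (f (x # xs)))) = f (x # xs)"
    using sum_lmul_diag_unit[OF f_val] by (simp add: lmul_diag_unit_idem)
  also have "(\<Sum>c\<in>{1..n}. lmul (?E c) (\<Sum>d\<in>{1..n}. lmul (corner c x d) (homotopy_at d f xs))) = lmul x (homotopy f xs)"
    by (simp only: sum_lmul_corners[OF x] homotopy_def)
  also have "(\<Sum>c\<in>{1..n}. lmul (?E c) (normalized c f (x # xs))) = 0"
    using f_lin x xs by (intro sum.neutral ballI lmul_normalized_eq_0) (auto simp: qgeq_refl)
  finally show ?thesis by (simp add: cobd_Cons algebra_simps)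
qed

lemma homotopy_cobd_Nil: assumes "proj (f []) = f []" shows "homotopy (cobd f) [] = f []"
proof -
  have "lmul (diag_unit c) (normalized c f []) = 0" if "c \<in> {1..n}" for c
    using that by (intro lmul_normalized_eq_0) (auto simp: multilinear_def qgeq_refl)
  then have "lmul (diag_unit c) (cobd f [diag_unit c]) = lmul (diag_unit c) (f [])" if "c \<in> {1..n}" for c
    using that by (simp add: cobd_Cons lmul.diff lmul_diag_unit_idem)
  then have "homotopy (cobd f) [] = (\<Sum>c\<in>{1..n}. lmul (diag_unit c) (f []))"
    unfolding homotopy_def homotopy_at.simps by (rule sum.cong[OF refl])
  then show ?thesis using sum_lmul_diag_unit[OF assms] by simp
qed

lemma homotopy_cobd_eq_0:
  assumes "\<forall>ys\<in>lists alg. length ys = Suc (length xs) \<longrightarrow> cobd f ys = 0" "xs \<in> lists alg"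
  shows "homotopy (cobd f) xs = 0"
proof -
  have "homotopy_at c (cobd f) xs = homotopy_at c 0 xs" if "c \<in> {1..n}" for c
    using assms that by (intro homotopy_at_cong) (auto simp: zero_fun_apply)
  then show ?thesis by (simp add: homotopy_def homotopy_at.zero lmul.zero)
qed

lemma hochschild_cohomology_vanishes: "hochschild_vanishes n Arr t h i TYPE('a::comm_ring_1)"
  unfolding hochschild_vanishes_def
proof (intro allI impI)
  fix f :: "'a mat list \<Rightarrow> 'a mat"
  assume "hcochain n Arr t h i f \<and> (\<forall>xs\<in>lists alg. length xs = Suc i \<longrightarrow> hdiff n Arr t h i f xs = (\<lambda>_ _. 0))"
  then have f_val: "\<forall>xs\<in>lists alg. length xs = i \<longrightarrow> proj (f xs) = f xs" and f_lin: "multilinear i f"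
    and cocycle: "\<forall>xs\<in>lists alg. length xs = Suc i \<longrightarrow> cobd f xs = 0"
    by (auto simp: hcochain_iff hdiff_eq_cobd zero_fun_def)
  show "if i = 0 then f [] = (\<lambda>_ _. 0) else \<exists>g. hcochain n Arr t h (i - 1) g \<and>
      (\<forall>xs\<in>lists alg. length xs = i \<longrightarrow> hdiff n Arr t h (i - 1) g xs = f xs)"
  proof (cases i)
    case 0
    then have "f [] = homotopy (cobd f) []" using f_val homotopy_cobd_Nil[of f] by simp
    also have "\<dots> = 0" using cocycle 0 by (intro homotopy_cobd_eq_0) auto
    finally show ?thesis using 0 by (simp add: zero_fun_def)
  next
    case (Suc m)
    have "hcochain n Arr t h m (homotopy f)"
      using f_lin Suc by (simp add: hcochain_iff proj_homotopy multilinear_homotopy)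
    moreover have "hdiff n Arr t h m (homotopy f) xs = f xs" if xs: "xs \<in> lists alg" "length xs = i" for xs
    proof -
      obtain y ys where xs_eq: "xs = y # ys" using xs Suc by (cases xs) auto
      have "cobd (homotopy f) xs + homotopy (cobd f) xs = f xs"
        unfolding xs_eq by (rule cobd_homotopy_add_homotopy_cobd) (use f_lin f_val xs xs_eq in auto)
      moreover have "homotopy (cobd f) xs = 0" using cocycle xs by (intro homotopy_cobd_eq_0) auto
      ultimately show ?thesis using hdiff_eq_cobd[of xs m "homotopy f"] xs Suc by simp
    qed
    ultimately show ?thesis using Suc by auto
  qed
qed

end

theorem theorem4p5:
  fixes n :: nat and Arr :: "'q set" and t h :: "'q \<Rightarrow> nat"
  assumes "ordered_quiver n Arr t h"
  shows "\<forall>i. hochschild_vanishes n Arr t h i TYPE('a::comm_ring_1)"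
  using incidence.hochschild_cohomology_vanishes by blast

end
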